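(* Let $G=G_1\times G_2$ be a product of commutative groups, $f_1\in\ell^1(G_1)$, $f_2\in\ell^1(G_2)$ nonnegative, and define $f\in\ell^1(G)$ by $f(x,y)=f_1(x)f_2(y)$. Let $1<p<\infty$. Then \[ \gamma_p(f)=\gamma_p(f_1)\gamma_p(f_2),\qquad \gamma'(f)\le\gamma'(f_1)\gamma'(f_2),\qquad \gamma''(f)\le\gamma''(f_1)\gamma''(f_2), \] each functional being computed in the group on which its argument lives.
   Context: For nonnegative functions $f,g$ on a commutative group $K$, $(f\star g)(x)=\max_t f(t)g(x-t)$ (max-convolution). The distribution function of $f$ is $F(t)=|\{x:f(x)\ge t\}|$ for $t>0$, and $g\sim h$ means $g,h$ have the same distribution function. For nonnegative $f\in\ell^1(K)$, $1/p+1/q=1$, and $g,h$ ranging over nonzero nonnegative functions in $\ell^1(K)$: $\gamma_p(f)=\inf_{g,h}\frac{\|f\star g\star h\|_1}{\|g\|_p\|h\|_q}$; $\gamma'(f)=\inf_{g\sim h}\frac{\|f\star g\star h\|_1}{\|g\|_2\|h\|_2}$; $\gamma''(f)=\inf_g\frac{\|f\star g\star g\|_1}{\|g\|_2^2}$. *)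

theory Defs
  imports "HOL-Analysis.Analysis"
begin

definition nonneg_l1 :: "('a \<Rightarrow> real) \<Rightarrow> bool" where
  "nonneg_l1 f \<longleftrightarrow> (\<forall>x. 0 \<le> f x) \<and> f summable_on UNIV"

text \<open>Max-convolution (f * g)(x) = max_t f(t) g(x - t); for nonnegative ell^1
  functions the maximum is attained, so it equals the supremum.\<close>
definition maxconv :: "('a::ab_group_add \<Rightarrow> real) \<Rightarrow> ('a \<Rightarrow> real) \<Rightarrow> 'a \<Rightarrow> real"
  (infixl "\<star>" 70) where
  "(f \<star> g) x = (SUP t. f t * g (x - t))"

definition l1norm :: "('a \<Rightarrow> real) \<Rightarrow> real" where
  "l1norm f = (\<Sum>\<^sub>\<infinity>x. \<bar>f x\<bar>)"

definition lpnorm :: "real \<Rightarrow> ('a \<Rightarrow> real) \<Rightarrow> real" where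
  "lpnorm p f = (\<Sum>\<^sub>\<infinity>x. \<bar>f x\<bar> powr p) powr (1 / p)"

definition distfun :: "('a \<Rightarrow> real) \<Rightarrow> real \<Rightarrow> nat" where
  "distfun f t = card {x. t \<le> f x}"

definition equidist :: "('a \<Rightarrow> real) \<Rightarrow> ('a \<Rightarrow> real) \<Rightarrow> bool" where
  "equidist g h \<longleftrightarrow> (\<forall>t>0. distfun g t = distfun h t)"

definition conj_exp :: "real \<Rightarrow> real" where
  "conj_exp p = p / (p - 1)"

definition gamma_p :: "real \<Rightarrow> ('a::ab_group_add \<Rightarrow> real) \<Rightarrow> real" where
  "gamma_p p f = Inf {l1norm ((f \<star> g) \<star> h) / (lpnorm p g * lpnorm (conj_exp p) h) | g h.
      nonneg_l1 g \<and> nonneg_l1 h \<and> g \<noteq> (\<lambda>_. 0) \<and> h \<noteq> (\<lambda>_. 0)}"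

definition gamma' :: "('a::ab_group_add \<Rightarrow> real) \<Rightarrow> real" where
  "gamma' f = Inf {l1norm ((f \<star> g) \<star> h) / (lpnorm 2 g * lpnorm 2 h) | g h.
      nonneg_l1 g \<and> nonneg_l1 h \<and> g \<noteq> (\<lambda>_. 0) \<and> h \<noteq> (\<lambda>_. 0) \<and> equidist g h}"

definition gamma'' :: "('a::ab_group_add \<Rightarrow> real) \<Rightarrow> real" where
  "gamma'' f = Inf {l1norm ((f \<star> g) \<star> g) / (lpnorm 2 g)\<^sup>2 | g.
      nonneg_l1 g \<and> g \<noteq> (\<lambda>_. 0)}"

end

theory Submission
  imports Defs
begin

text \<open>
  All three functionals are infima of the ratio of the l^1 norm of (f \<star> g) \<star> h to the
  norms of the test functions g and h. For tensor products of test functions, the ratio for the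
  tensor product of f1 and f2 is at most the product of the ratios for f1 and for f2: the
  max-convolution of tensor products is dominated pointwise by the tensor product of the
  max-convolutions, and l^p norms of tensor products multiply. Tensor products of equidistributed
  pairs are equidistributed, because level sets of positive values are finite and can be matched
  by bijections.

  For the reverse inequality for gamma_p, take arbitrary g and h on G1 \<times> G2. On every fibre the
  slices of g and h are test functions for gamma_p(f2), which bounds the fibre sums of
  (f \<star> g) \<star> h below by gamma_p(f2) times ((f1 \<star> G) \<star> H)(x), where G(a) = ||g(a, -)||_p
  and H(a) = ||h(a, -)||_q. Then G and H are test functions for gamma_p(f1), and by Fubini
  ||G||_p = ||g||_p and ||H||_q = ||h||_q.
\<close>

lemma nonneg_l1_nonneg: "nonneg_l1 f \<Longrightarrow> 0 \<le> f x"
  by (simp add: nonneg_l1_def)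

lemma nonneg_l1_summable: "nonneg_l1 f \<Longrightarrow> f summable_on UNIV"
  by (simp add: nonneg_l1_def)

lemma nonneg_l1_le_infsum: "nonneg_l1 f \<Longrightarrow> f x \<le> infsum f UNIV"
  using finite_sum_le_infsum[of f UNIV "{x}"] by (auto simp: nonneg_l1_def)

lemma nonneg_l1_superlevel_finite:
  assumes "nonneg_l1 g" "0 < t"
  shows "finite {x. t \<le> g x}"
proof (rule ccontr)
  assume "infinite {x. t \<le> g x}"
  then obtain B where B: "finite B" "card B = nat \<lceil>infsum g UNIV / t\<rceil> + 1" "B \<subseteq> {x. t \<le> g x}"
    using infinite_arbitrarily_large by blast
  have "real (card B) * t \<le> sum g B"
    using B sum_mono[of B "\<lambda>_. t" g] by auto
  also have "\<dots> \<le> infsum g UNIV"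
    using finite_sum_le_infsum[OF nonneg_l1_summable[OF assms(1)] B(1)] assms(1)
    by (auto simp: nonneg_l1_nonneg)
  finally have "real (card B) \<le> infsum g UNIV / t"
    using assms(2) by (simp add: le_divide_eq)
  then show False
    using B(2) by linarith
qed

definition nonzero_nonneg_l1 :: "('a \<Rightarrow> real) set" where
  "nonzero_nonneg_l1 = {g. nonneg_l1 g \<and> g \<noteq> (\<lambda>_. 0)}"

lemma nonzero_nonneg_l1_imp_nonneg_l1: "g \<in> nonzero_nonneg_l1 \<Longrightarrow> nonneg_l1 g"
  by (simp add: nonzero_nonneg_l1_def)

lemma indicator_in_nonzero_nonneg_l1: "indicator {a} \<in> nonzero_nonneg_l1"
proof -
  have "nonneg_l1 (indicator {a} :: _ \<Rightarrow> real)"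
    unfolding nonneg_l1_def
    by (auto intro!: finite_nonzero_values_imp_summable_on finite_subset[of _ "{a}"]
        simp: indicator_def)
  moreover have "(indicator {a} :: _ \<Rightarrow> real) \<noteq> (\<lambda>_. 0)"
    by (auto dest!: fun_cong[where x = a])
  ultimately show ?thesis
    by (simp add: nonzero_nonneg_l1_def)
qed

lemma nonzero_nonneg_l1_nonempty: "nonzero_nonneg_l1 \<noteq> {}"
  using indicator_in_nonzero_nonneg_l1 by (metis empty_iff)

lemma conj_exp_gt_1: "1 < p \<Longrightarrow> 1 < conj_exp p"
  by (simp add: conj_exp_def less_divide_eq)

section \<open>Tensor products\<close>

definition tensor :: "('a \<Rightarrow> real) \<Rightarrow> ('b \<Rightarrow> real) \<Rightarrow> 'a \<times> 'b \<Rightarrow> real" where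
  "tensor u v = (\<lambda>(x, y). u x * v y)"

lemma tensor_apply [simp]: "tensor u v (x, y) = u x * v y"
  by (simp add: tensor_def)

lemma nonneg_l1_tensor:
  assumes "nonneg_l1 u" "nonneg_l1 v"
  shows "nonneg_l1 (tensor u v)"
proof -
  have "tensor u v summable_on UNIV \<times> UNIV"
  proof (rule summable_on_SigmaI[where g = "\<lambda>x. u x * infsum v UNIV"])
    show "((\<lambda>y. tensor u v (x, y)) has_sum u x * infsum v UNIV) UNIV" for x
      using has_sum_cmult_right[OF has_sum_infsum[OF nonneg_l1_summable[OF assms(2)]]] by simp
    show "(\<lambda>x. u x * infsum v UNIV) summable_on UNIV"
      using summable_on_cmult_left[OF nonneg_l1_summable[OF assms(1)]] .
  qed (use assms in \<open>simp add: nonneg_l1_nonneg\<close>)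
  then show ?thesis
    using assms by (auto simp: nonneg_l1_def tensor_def)
qed

lemma infsum_tensor:
  assumes "nonneg_l1 u" "nonneg_l1 v"
  shows "infsum (tensor u v) UNIV = infsum u UNIV * infsum v UNIV"
proof -
  have "infsum (tensor u v) UNIV = infsum (\<lambda>x. infsum (\<lambda>y. u x * v y) UNIV) UNIV"
    using infsum_Sigma_banach[of "tensor u v" UNIV "\<lambda>_. UNIV"] nonneg_l1_tensor[OF assms]
    by (simp add: nonneg_l1_def)
  also have "\<dots> = infsum u UNIV * infsum v UNIV"
    by (simp add: infsum_cmult_right' infsum_cmult_left')
  finally show ?thesis .
qed

lemma tensor_in_nonzero_nonneg_l1:
  assumes "u \<in> nonzero_nonneg_l1" "v \<in> nonzero_nonneg_l1"
  shows "tensor u v \<in> nonzero_nonneg_l1"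
proof -
  obtain a b where "u a \<noteq> 0" "v b \<noteq> 0"
    using assms by (auto simp: nonzero_nonneg_l1_def fun_eq_iff)
  then have "tensor u v (a, b) \<noteq> 0"
    by simp
  then have "tensor u v \<noteq> (\<lambda>_. 0)"
    by force
  then show ?thesis
    using assms by (simp add: nonzero_nonneg_l1_def nonneg_l1_tensor)
qed

section \<open>Max-convolution\<close>

lemma maxconv_ge:
  assumes "nonneg_l1 f" "nonneg_l1 g"
  shows "f t * g (x - t) \<le> (f \<star> g) x"
proof -
  have "bdd_above (range (\<lambda>s. f s * g (x - s)))"
  proof (rule bdd_aboveI2)
    show "f s * g (x - s) \<le> infsum f UNIV * infsum g UNIV" for s
      using assms by (intro mult_mono nonneg_l1_le_infsum) (auto intro: infsum_nonneg simp: nonneg_l1_def)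
  qed
  then show ?thesis
    unfolding maxconv_def by (rule cSUP_upper[rotated]) simp
qed

lemma maxconv_le: "(\<And>t. f t * g (x - t) \<le> M) \<Longrightarrow> (f \<star> g) x \<le> M"
  unfolding maxconv_def by (rule cSUP_least) auto

lemma maxconv_nonneg:
  assumes "nonneg_l1 f" "nonneg_l1 g"
  shows "0 \<le> (f \<star> g) x"
  using maxconv_ge[OF assms, of 0 x] assms
  by (meson mult_nonneg_nonneg nonneg_l1_nonneg order_trans)

lemma maxconv_mult_le:
  assumes "0 \<le> c" "\<And>t. c * (f t * g (x - t)) \<le> M"
  shows "c * (f \<star> g) x \<le> M"
proof (cases "c = 0")
  case True
  then show ?thesis
    using assms(2)[of 0] by simp
next
  case False
  with assms(1) have "0 < c"
    by simp
  have "(f \<star> g) x \<le> M / c"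
    by (rule maxconv_le) (use assms(2) \<open>0 < c\<close> in \<open>simp add: pos_le_divide_eq mult.commute\<close>)
  then show ?thesis
    using \<open>0 < c\<close> by (simp add: pos_le_divide_eq mult.commute)
qed

text \<open>The max-convolution is dominated by the ordinary convolution, which is summable because
  it is a reindexing of the tensor product.\<close>
lemma nonneg_l1_maxconv:
  fixes f g :: "'a::ab_group_add \<Rightarrow> real"
  assumes "nonneg_l1 f" "nonneg_l1 g"
  shows "nonneg_l1 (f \<star> g)"
proof -
  let ?k = "\<lambda>(x, t). f t * g (x - t)"
  have "bij_betw (\<lambda>(x, t). (t, x - t)) UNIV (UNIV :: ('a \<times> 'a) set)"
    by (rule bij_betw_byWitness[where f' = "\<lambda>(t, y). (y + t, t)"]) auto
  then have "(\<lambda>z. tensor f g ((\<lambda>(x, t). (t, x - t)) z)) summable_on UNIV"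
    using summable_on_reindex_bij_betw nonneg_l1_summable[OF nonneg_l1_tensor[OF assms]] by blast
  then have k: "?k summable_on UNIV \<times> UNIV"
    by (simp add: case_prod_beta')
  have row: "(\<lambda>t. f t * g (x - t)) summable_on UNIV" for x
    using summable_on_SigmaD1[of "\<lambda>x t. f t * g (x - t)", OF k] by simp
  have "(\<lambda>x. infsum (\<lambda>t. f t * g (x - t)) UNIV) summable_on UNIV"
    using summable_on_SigmaD[OF k] row by simp
  moreover have "(f \<star> g) x \<le> infsum (\<lambda>t. f t * g (x - t)) UNIV" for x
    using row assms
    by (intro maxconv_le nonneg_l1_le_infsum) (simp add: nonneg_l1_def nonneg_l1_nonneg)
  ultimately show ?thesis
    unfolding nonneg_l1_def using summable_on_comparison_test maxconv_nonneg[OF assms] by blast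
qed

lemma maxconv_tensor_le:
  fixes u :: "'a::ab_group_add \<times> 'b::ab_group_add \<Rightarrow> real"
  assumes "nonneg_l1 u1" "nonneg_l1 u2" "nonneg_l1 v1" "nonneg_l1 v2"
    and "\<And>z. 0 \<le> u z" "\<And>a b. u (a, b) \<le> u1 a * u2 b"
  shows "(u \<star> tensor v1 v2) (x, y) \<le> (u1 \<star> v1) x * (u2 \<star> v2) y"
proof (rule maxconv_le)
  fix t :: "'a \<times> 'b"
  obtain t1 t2 where t: "t = (t1, t2)"
    by (cases t)
  have "u t * tensor v1 v2 ((x, y) - t) = u (t1, t2) * (v1 (x - t1) * v2 (y - t2))"
    by (simp add: t)
  also have "\<dots> \<le> (u1 t1 * u2 t2) * (v1 (x - t1) * v2 (y - t2))"
    by (rule mult_right_mono[OF assms(6)]) (simp add: assms(3,4) nonneg_l1_nonneg)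
  also have "\<dots> = (u1 t1 * v1 (x - t1)) * (u2 t2 * v2 (y - t2))"
    by (simp add: ac_simps)
  also have "\<dots> \<le> (u1 \<star> v1) x * (u2 \<star> v2) y"
    by (rule mult_mono[OF maxconv_ge[OF assms(1,3)] maxconv_ge[OF assms(2,4)]
          maxconv_nonneg[OF assms(1,3)]])
      (simp add: assms(2,4) nonneg_l1_nonneg)
  finally show "u t * tensor v1 v2 ((x, y) - t) \<le> (u1 \<star> v1) x * (u2 \<star> v2) y" .
qed

lemma maxconv3_tensor_le:
  fixes f1 g1 h1 :: "'a::ab_group_add \<Rightarrow> real" and f2 g2 h2 :: "'b::ab_group_add \<Rightarrow> real"
  assumes "nonneg_l1 f1" "nonneg_l1 f2" "nonneg_l1 g1" "nonneg_l1 g2" "nonneg_l1 h1" "nonneg_l1 h2"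
  shows "((tensor f1 f2 \<star> tensor g1 g2) \<star> tensor h1 h2) z
    \<le> tensor ((f1 \<star> g1) \<star> h1) ((f2 \<star> g2) \<star> h2) z"
proof -
  have fg: "(tensor f1 f2 \<star> tensor g1 g2) (a, b) \<le> (f1 \<star> g1) a * (f2 \<star> g2) b" for a b
    by (rule maxconv_tensor_le) (simp_all add: assms nonneg_l1_nonneg[OF nonneg_l1_tensor])
  obtain x y where "z = (x, y)"
    by (cases z)
  then show ?thesis
    unfolding tensor_apply
    by (auto intro!: maxconv_tensor_le fg
        simp: assms maxconv_nonneg nonneg_l1_maxconv nonneg_l1_tensor)
qed

lemma l1norm_eq_infsum: "nonneg_l1 f \<Longrightarrow> l1norm f = infsum f UNIV"
  by (simp add: l1norm_def nonneg_l1_def)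

lemma l1norm_nonneg: "0 \<le> l1norm f"
  unfolding l1norm_def by (rule infsum_nonneg) simp

lemma lpnorm_eq: "nonneg_l1 f \<Longrightarrow> lpnorm p f = infsum (\<lambda>x. f x powr p) UNIV powr (1 / p)"
  by (simp add: lpnorm_def nonneg_l1_def)

lemma lpnorm_nonneg: "0 \<le> lpnorm p f"
  by (simp add: lpnorm_def)

lemma nonneg_l1_powr:
  assumes "nonneg_l1 g" "1 \<le> p"
  shows "nonneg_l1 (\<lambda>x. g x powr p)"
    and "infsum (\<lambda>x. g x powr p) UNIV \<le> infsum g UNIV powr p"
proof -
  define B where "B = infsum g UNIV"
  have "0 \<le> B"
    unfolding B_def using assms(1) by (simp add: infsum_nonneg nonneg_l1_nonneg)
  have le: "g x powr p \<le> B powr (p - 1) * g x" for x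
  proof (cases "g x = 0")
    case False
    then have "0 < g x"
      using nonneg_l1_nonneg[OF assms(1), of x] by simp
    then have "g x powr p = g x powr (p - 1) * g x"
      by (simp add: powr_diff)
    also have "\<dots> \<le> B powr (p - 1) * g x"
      using \<open>0 < g x\<close> assms nonneg_l1_le_infsum[OF assms(1)] unfolding B_def
      by (intro mult_right_mono powr_mono2) auto
    finally show ?thesis .
  qed simp
  have S: "(\<lambda>x. B powr (p - 1) * g x) summable_on UNIV"
    using nonneg_l1_summable[OF assms(1)] by (rule summable_on_cmult_right)
  show "nonneg_l1 (\<lambda>x. g x powr p)"
    unfolding nonneg_l1_def using summable_on_comparison_test[OF S le] by simp
  then have "infsum (\<lambda>x. g x powr p) UNIV \<le> infsum (\<lambda>x. B powr (p - 1) * g x) UNIV"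
    by (intro infsum_mono le S nonneg_l1_summable)
  also have "\<dots> = B powr (p - 1) * B"
    unfolding B_def by (simp add: infsum_cmult_right')
  also have "\<dots> = B powr p"
    using assms(2) \<open>0 \<le> B\<close> by (cases "B = 0") (simp_all add: powr_diff)
  finally show "infsum (\<lambda>x. g x powr p) UNIV \<le> infsum g UNIV powr p"
    unfolding B_def .
qed

lemma lpnorm_le_infsum:
  assumes "nonneg_l1 g" "1 \<le> p"
  shows "lpnorm p g \<le> infsum g UNIV"
proof -
  have "lpnorm p g \<le> (infsum g UNIV powr p) powr (1 / p)"
    using assms nonneg_l1_powr[OF assms]
    by (auto simp: lpnorm_eq nonneg_l1_def intro!: powr_mono2 infsum_nonneg)
  also have "\<dots> = infsum g UNIV"
    using assms by (simp add: powr_powr infsum_nonneg nonneg_l1_def)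
  finally show ?thesis .
qed

lemma lpnorm_pos:
  assumes "g \<in> nonzero_nonneg_l1" "1 \<le> p"
  shows "0 < lpnorm p g"
proof -
  have g: "nonneg_l1 g"
    using assms(1) by (simp add: nonzero_nonneg_l1_def)
  obtain x where "g x \<noteq> 0"
    using assms(1) by (auto simp: nonzero_nonneg_l1_def fun_eq_iff)
  then have "0 < g x powr p"
    using nonneg_l1_nonneg[OF g, of x] by simp
  also have "\<dots> \<le> infsum (\<lambda>x. g x powr p) UNIV"
    using nonneg_l1_le_infsum[OF nonneg_l1_powr(1)[OF g assms(2)]] .
  finally show ?thesis
    using g by (simp add: lpnorm_eq)
qed

lemma lpnorm_tensor:
  assumes "nonneg_l1 u" "nonneg_l1 v" "1 \<le> p"
  shows "lpnorm p (tensor u v) = lpnorm p u * lpnorm p v"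
proof -
  have "(\<lambda>z. tensor u v z powr p) = tensor (\<lambda>x. u x powr p) (\<lambda>y. v y powr p)"
    using assms by (auto simp: tensor_def powr_mult nonneg_l1_nonneg)
  then have "infsum (\<lambda>z. tensor u v z powr p) UNIV
      = infsum (\<lambda>x. u x powr p) UNIV * infsum (\<lambda>y. v y powr p) UNIV"
    using assms by (simp add: infsum_tensor nonneg_l1_powr)
  then show ?thesis
    using assms
    by (simp add: lpnorm_eq nonneg_l1_tensor powr_mult infsum_nonneg)
qed


definition maxconv_ratio ::
    "real \<Rightarrow> real \<Rightarrow> ('a::ab_group_add \<Rightarrow> real) \<Rightarrow> ('a \<Rightarrow> real) \<Rightarrow> ('a \<Rightarrow> real) \<Rightarrow> real" where
  "maxconv_ratio p q f g h = l1norm ((f \<star> g) \<star> h) / (lpnorm p g * lpnorm q h)"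

lemma maxconv_ratio_nonneg: "0 \<le> maxconv_ratio p q f g h"
  unfolding maxconv_ratio_def
  by (intro divide_nonneg_nonneg mult_nonneg_nonneg l1norm_nonneg lpnorm_nonneg)

lemma le_maxconv_ratio_iff:
  assumes "g \<in> nonzero_nonneg_l1" "h \<in> nonzero_nonneg_l1" "1 \<le> p" "1 \<le> q"
  shows "c \<le> maxconv_ratio p q f g h \<longleftrightarrow> c * (lpnorm p g * lpnorm q h) \<le> l1norm ((f \<star> g) \<star> h)"
  using lpnorm_pos[OF assms(1,3)] lpnorm_pos[OF assms(2,4)]
  by (simp add: maxconv_ratio_def pos_le_divide_eq)

lemma maxconv_ratio_tensor_le:
  fixes f1 g1 h1 :: "'a::ab_group_add \<Rightarrow> real" and f2 g2 h2 :: "'b::ab_group_add \<Rightarrow> real"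
  assumes "nonneg_l1 f1" "nonneg_l1 f2" "nonneg_l1 g1" "nonneg_l1 g2" "nonneg_l1 h1" "nonneg_l1 h2"
    and "1 \<le> p" "1 \<le> q"
  shows "maxconv_ratio p q (tensor f1 f2) (tensor g1 g2) (tensor h1 h2)
    \<le> maxconv_ratio p q f1 g1 h1 * maxconv_ratio p q f2 g2 h2"
proof -
  have "nonneg_l1 ((tensor f1 f2 \<star> tensor g1 g2) \<star> tensor h1 h2)"
    and "nonneg_l1 (tensor ((f1 \<star> g1) \<star> h1) ((f2 \<star> g2) \<star> h2))"
    using assms by (simp_all add: nonneg_l1_maxconv nonneg_l1_tensor)
  then have "l1norm ((tensor f1 f2 \<star> tensor g1 g2) \<star> tensor h1 h2)
      \<le> infsum (tensor ((f1 \<star> g1) \<star> h1) ((f2 \<star> g2) \<star> h2)) UNIV"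
    unfolding l1norm_eq_infsum[OF \<open>nonneg_l1 ((tensor f1 f2 \<star> tensor g1 g2) \<star> tensor h1 h2)\<close>]
    by (intro infsum_mono nonneg_l1_summable maxconv3_tensor_le assms)
  also have "\<dots> = l1norm ((f1 \<star> g1) \<star> h1) * l1norm ((f2 \<star> g2) \<star> h2)"
    using assms by (simp add: infsum_tensor l1norm_eq_infsum nonneg_l1_maxconv)
  finally show ?thesis
    using assms unfolding maxconv_ratio_def
    by (simp add: lpnorm_tensor divide_right_mono mult_nonneg_nonneg lpnorm_nonneg ac_simps)
qed

lemma gamma_p_eq_INF:
  "gamma_p p f = (INF (g, h)\<in>nonzero_nonneg_l1 \<times> nonzero_nonneg_l1. maxconv_ratio p (conj_exp p) f g h)"
  unfolding gamma_p_def maxconv_ratio_def nonzero_nonneg_l1_def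
  by (rule arg_cong[where f = Inf]) auto

lemma gamma'_eq_INF:
  "gamma' f = (INF (g, h)\<in>{(g, h) \<in> nonzero_nonneg_l1 \<times> nonzero_nonneg_l1. equidist g h}.
    maxconv_ratio 2 2 f g h)"
  unfolding gamma'_def maxconv_ratio_def nonzero_nonneg_l1_def
  by (rule arg_cong[where f = Inf]) auto

lemma gamma''_eq_INF: "gamma'' f = (INF g\<in>nonzero_nonneg_l1. maxconv_ratio 2 2 f g g)"
  unfolding gamma''_def maxconv_ratio_def nonzero_nonneg_l1_def
  by (rule arg_cong[where f = Inf]) (auto simp: power2_eq_square)

lemma le_INF_mult_right:
  fixes F :: "'i \<Rightarrow> real"
  assumes "A \<noteq> {}" "0 \<le> c" "\<And>i. i \<in> A \<Longrightarrow> a \<le> F i * c"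
  shows "a \<le> (INF i\<in>A. F i) * c"
proof (cases "c = 0")
  case True
  with assms show ?thesis
    by fastforce
next
  case False
  with assms(2) have "0 < c"
    by simp
  with assms(1,3) have "a / c \<le> (INF i\<in>A. F i)"
    by (intro cINF_greatest) (auto simp: pos_divide_le_eq)
  with \<open>0 < c\<close> show ?thesis
    by (simp add: pos_divide_le_eq)
qed

lemma INF_le_mult_INF:
  fixes F :: "'i \<Rightarrow> real" and F1 :: "'j \<Rightarrow> real" and F2 :: "'k \<Rightarrow> real"
  assumes nonempty: "A1 \<noteq> {}" "A2 \<noteq> {}"
    and nonneg: "\<And>j. j \<in> A1 \<Longrightarrow> 0 \<le> F1 j" "\<And>k. k \<in> A2 \<Longrightarrow> 0 \<le> F2 k"
    and bdd: "bdd_below (F ` A)"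
    and combine: "\<And>j k. j \<in> A1 \<Longrightarrow> k \<in> A2 \<Longrightarrow> c j k \<in> A \<and> F (c j k) \<le> F1 j * F2 k"
  shows "(INF i\<in>A. F i) \<le> (INF j\<in>A1. F1 j) * (INF k\<in>A2. F2 k)"
proof (rule le_INF_mult_right[OF nonempty(1)])
  show "0 \<le> (INF k\<in>A2. F2 k)"
    using nonempty(2) nonneg(2) by (rule cINF_greatest)
  fix j assume "j \<in> A1"
  have "(INF i\<in>A. F i) \<le> (INF k\<in>A2. F2 k) * F1 j"
  proof (rule le_INF_mult_right[OF nonempty(2) nonneg(1)[OF \<open>j \<in> A1\<close>]])
    fix k assume "k \<in> A2"
    with \<open>j \<in> A1\<close> combine have "(INF i\<in>A. F i) \<le> F1 j * F2 k"
      by (meson cINF_lower2[OF bdd])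
    then show "(INF i\<in>A. F i) \<le> F2 k * F1 j"
      by (simp add: mult.commute)
  qed
  then show "(INF i\<in>A. F i) \<le> F1 j * (INF k\<in>A2. F2 k)"
    by (simp add: mult.commute)
qed

lemma bdd_below_maxconv_ratio: "bdd_below ((\<lambda>(g, h). maxconv_ratio p q f g h) ` A)"
  by (rule bdd_belowI2[where m = 0]) (auto simp: maxconv_ratio_nonneg)

lemma gamma_p_nonneg: "0 \<le> gamma_p p f"
  unfolding gamma_p_eq_INF
  by (rule cINF_greatest) (auto simp: maxconv_ratio_nonneg intro: indicator_in_nonzero_nonneg_l1)

lemma gamma_p_mult_le_l1norm:
  assumes "1 < p" "nonneg_l1 g" "nonneg_l1 h"
  shows "gamma_p p f * (lpnorm p g * lpnorm (conj_exp p) h) \<le> l1norm ((f \<star> g) \<star> h)"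
proof (cases "g = (\<lambda>_. 0) \<or> h = (\<lambda>_. 0)")
  case True
  then show ?thesis
    by (auto simp: lpnorm_def l1norm_nonneg)
next
  case False
  then have gh: "(g, h) \<in> nonzero_nonneg_l1 \<times> nonzero_nonneg_l1"
    using assms by (simp add: nonzero_nonneg_l1_def)
  have "gamma_p p f \<le> maxconv_ratio p (conj_exp p) f g h"
    unfolding gamma_p_eq_INF using gh by (rule cINF_lower2[OF bdd_below_maxconv_ratio]) simp
  with gh show ?thesis
    using assms(1) conj_exp_gt_1[OF assms(1)] by (simp add: le_maxconv_ratio_iff)
qed

lemma gamma_p_tensor_le:
  fixes f1 :: "'a::ab_group_add \<Rightarrow> real" and f2 :: "'b::ab_group_add \<Rightarrow> real"
  assumes "nonneg_l1 f1" "nonneg_l1 f2" "1 < p"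
  shows "gamma_p p (tensor f1 f2) \<le> gamma_p p f1 * gamma_p p f2"
proof -
  have "1 \<le> conj_exp p"
    using conj_exp_gt_1[OF assms(3)] by simp
  then show ?thesis
    unfolding gamma_p_eq_INF
    using assms
    by (intro INF_le_mult_INF[where c = "\<lambda>(g1, h1) (g2, h2). (tensor g1 g2, tensor h1 h2)"])
      (auto simp: maxconv_ratio_nonneg bdd_below_maxconv_ratio nonzero_nonneg_l1_nonempty
        nonzero_nonneg_l1_imp_nonneg_l1 intro!: maxconv_ratio_tensor_le tensor_in_nonzero_nonneg_l1)
qed

lemma gamma''_tensor_le:
  fixes f1 :: "'a::ab_group_add \<Rightarrow> real" and f2 :: "'b::ab_group_add \<Rightarrow> real"
  assumes "nonneg_l1 f1" "nonneg_l1 f2"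
  shows "gamma'' (tensor f1 f2) \<le> gamma'' f1 * gamma'' f2"
  unfolding gamma''_eq_INF
  using assms
  by (intro INF_le_mult_INF[where c = tensor])
    (auto simp: maxconv_ratio_nonneg nonzero_nonneg_l1_nonempty nonzero_nonneg_l1_imp_nonneg_l1
      intro!: bdd_belowI2[where m = 0] maxconv_ratio_tensor_le tensor_in_nonzero_nonneg_l1)

section \<open>Equidistribution of tensor products\<close>

lemma equidist_refl: "equidist g g"
  by (simp add: equidist_def)

lemma equidist_pairs_nonempty:
  "{(g, h) \<in> nonzero_nonneg_l1 \<times> nonzero_nonneg_l1. equidist g h} \<noteq> {}"
proof -
  have "(indicator {a :: 'a}, indicator {a})
      \<in> {(g, h) \<in> nonzero_nonneg_l1 \<times> nonzero_nonneg_l1. equidist g h}"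
    using indicator_in_nonzero_nonneg_l1[of a] equidist_refl[of "indicator {a}"] by simp
  then show ?thesis
    by auto
qed

text \<open>Both level sets are the superlevel set at v minus the superlevel set at v', the next
  value above v taken by g or h.\<close>
lemma equidist_level_card:
  assumes g: "nonneg_l1 g" and h: "nonneg_l1 h" and "equidist g h" and "0 < v"
  shows "card {x. g x = v} = card {x. h x = v}"
proof -
  define S where "S = g ` {x. v \<le> g x} \<union> h ` {x. v \<le> h x}"
  have "finite S"
    unfolding S_def using nonneg_l1_superlevel_finite[OF g \<open>0 < v\<close>]
      nonneg_l1_superlevel_finite[OF h \<open>0 < v\<close>] by simp
  define v' where "v' = Min (insert (v + 1) {s \<in> S. v < s})"
  have "v < v'"
    unfolding v'_def using \<open>finite S\<close> by (subst Min_gr_iff) auto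
  have card: "card {x. k x = v} = distfun k v - distfun k v'" if "k = g \<or> k = h" for k
  proof -
    have "v' \<le> k x" if "v < k x" for x
    proof -
      have "k x \<in> {s \<in> S. v < s}"
        using \<open>k = g \<or> k = h\<close> \<open>v < k x\<close> unfolding S_def by auto
      then show ?thesis
        unfolding v'_def using \<open>finite S\<close> by (intro Min_le) auto
    qed
    then have "{x. k x = v} = {x. v \<le> k x} - {x. v' \<le> k x}"
      using \<open>v < v'\<close> by force
    moreover have "finite {x. v \<le> k x}"
      using that g h \<open>0 < v\<close> nonneg_l1_superlevel_finite by blast
    moreover have "{x. v' \<le> k x} \<subseteq> {x. v \<le> k x}"
      using \<open>v < v'\<close> by auto
    ultimately show ?thesis
      unfolding distfun_def by (simp add: card_Diff_subset finite_subset)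
  qed
  show ?thesis
    using card[of g] card[of h] \<open>equidist g h\<close> \<open>0 < v\<close> \<open>v < v'\<close>
    unfolding equidist_def by simp
qed

lemma equidist_obtain_bij:
  assumes g: "nonneg_l1 g" and h: "nonneg_l1 h" and "equidist g h"
  obtains \<sigma> where "bij_betw \<sigma> {x. 0 < g x} {x. 0 < h x}" and "\<And>x. 0 < g x \<Longrightarrow> h (\<sigma> x) = g x"
proof -
  have "\<exists>\<tau>. bij_betw \<tau> {x. g x = v} {x. h x = v}" if "0 < v" for v
  proof (rule finite_same_card_bij)
    show "finite {x. g x = v}" "finite {x. h x = v}"
      using nonneg_l1_superlevel_finite[OF g that] nonneg_l1_superlevel_finite[OF h that]
      by (auto elim: finite_subset[rotated])
    show "card {x. g x = v} = card {x. h x = v}"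
      using equidist_level_card[OF assms that] .
  qed
  then obtain \<tau> where \<tau>: "\<And>v. 0 < v \<Longrightarrow> bij_betw (\<tau> v) {x. g x = v} {x. h x = v}"
    by metis
  define \<sigma> where "\<sigma> x = \<tau> (g x) x" for x
  have val: "h (\<sigma> x) = g x" if "0 < g x" for x
    using \<tau>[OF that] unfolding \<sigma>_def bij_betw_def by auto
  have "inj_on \<sigma> {x. 0 < g x}"
  proof (rule inj_onI)
    fix x y assume "x \<in> {x. 0 < g x}" "y \<in> {x. 0 < g x}" "\<sigma> x = \<sigma> y"
    then have "g x = g y"
      using val by (metis mem_Collect_eq)
    with \<tau>[of "g x"] \<open>x \<in> {x. 0 < g x}\<close> \<open>\<sigma> x = \<sigma> y\<close> show "x = y"
      unfolding \<sigma>_def bij_betw_def by (auto dest: inj_onD)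
  qed
  moreover have "\<sigma> ` {x. 0 < g x} = {x. 0 < h x}"
  proof
    show "\<sigma> ` {x. 0 < g x} \<subseteq> {x. 0 < h x}"
      using val by auto
    show "{x. 0 < h x} \<subseteq> \<sigma> ` {x. 0 < g x}"
    proof
      fix z assume "z \<in> {x. 0 < h x}"
      then obtain x where "g x = h z" "z = \<tau> (h z) x"
        using \<tau>[of "h z"] unfolding bij_betw_def by (metis (mono_tags) imageE mem_Collect_eq)
      with \<open>z \<in> {x. 0 < h x}\<close> show "z \<in> \<sigma> ` {x. 0 < g x}"
        unfolding \<sigma>_def by (intro image_eqI[where x = x]) auto
    qed
  qed
  ultimately show ?thesis
    using that val unfolding bij_betw_def by blast
qed

lemma bij_betw_Collect_comp:
  assumes "bij_betw \<sigma> A B" "\<And>z. z \<in> A \<Longrightarrow> H (\<sigma> z) = G z"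
  shows "bij_betw \<sigma> {z \<in> A. P (G z)} {w \<in> B. P (H w)}"
proof (rule bij_betw_subset[OF assms(1)])
  show "\<sigma> ` {z \<in> A. P (G z)} = {w \<in> B. P (H w)}"
    using assms unfolding bij_betw_def by force
qed auto

lemma tensor_superlevel_subset:
  assumes "nonneg_l1 u" "nonneg_l1 v" "0 < t"
  shows "{z. t \<le> tensor u v z} \<subseteq> {x. 0 < u x} \<times> {y. 0 < v y}"
proof -
  have "0 < u a \<and> 0 < v b" if "t \<le> tensor u v (a, b)" for a b
  proof -
    from that assms(3) have "0 < u a * v b"
      by simp
    with nonneg_l1_nonneg[OF assms(1), of a] nonneg_l1_nonneg[OF assms(2), of b] show ?thesis
      by (auto simp: zero_less_mult_iff)
  qed
  then show ?thesis
    by auto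
qed

lemma equidist_tensor:
  assumes "nonneg_l1 g1" "nonneg_l1 h1" "equidist g1 h1"
    and "nonneg_l1 g2" "nonneg_l1 h2" "equidist g2 h2"
  shows "equidist (tensor g1 g2) (tensor h1 h2)"
  unfolding equidist_def distfun_def
proof (intro allI impI)
  fix t :: real assume "0 < t"
  obtain \<sigma>1 where \<sigma>1: "bij_betw \<sigma>1 {x. 0 < g1 x} {x. 0 < h1 x}" "\<And>x. 0 < g1 x \<Longrightarrow> h1 (\<sigma>1 x) = g1 x"
    using equidist_obtain_bij[OF assms(1-3)] by blast
  obtain \<sigma>2 where \<sigma>2: "bij_betw \<sigma>2 {x. 0 < g2 x} {x. 0 < h2 x}" "\<And>x. 0 < g2 x \<Longrightarrow> h2 (\<sigma>2 x) = g2 x"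
    using equidist_obtain_bij[OF assms(4-6)] by blast
  have "bij_betw (map_prod \<sigma>1 \<sigma>2)
      {z \<in> {x. 0 < g1 x} \<times> {x. 0 < g2 x}. t \<le> tensor g1 g2 z}
      {w \<in> {x. 0 < h1 x} \<times> {x. 0 < h2 x}. t \<le> tensor h1 h2 w}"
    using \<sigma>1 \<sigma>2
    by (intro bij_betw_Collect_comp[where P = "\<lambda>s. t \<le> s"] bij_betw_map_prod) auto
  moreover have "{z \<in> {x. 0 < g1 x} \<times> {x. 0 < g2 x}. t \<le> tensor g1 g2 z} = {z. t \<le> tensor g1 g2 z}"
    using tensor_superlevel_subset[OF assms(1,4) \<open>0 < t\<close>] by blast
  moreover have "{w \<in> {x. 0 < h1 x} \<times> {x. 0 < h2 x}. t \<le> tensor h1 h2 w} = {w. t \<le> tensor h1 h2 w}"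
    using tensor_superlevel_subset[OF assms(2,5) \<open>0 < t\<close>] by blast
  ultimately show "card {z. t \<le> tensor g1 g2 z} = card {z. t \<le> tensor h1 h2 z}"
    by (simp add: bij_betw_same_card)
qed

lemma gamma'_tensor_le:
  fixes f1 :: "'a::ab_group_add \<Rightarrow> real" and f2 :: "'b::ab_group_add \<Rightarrow> real"
  assumes "nonneg_l1 f1" "nonneg_l1 f2"
  shows "gamma' (tensor f1 f2) \<le> gamma' f1 * gamma' f2"
  unfolding gamma'_eq_INF
  using assms
  by (intro INF_le_mult_INF[where c = "\<lambda>(g1, h1) (g2, h2). (tensor g1 g2, tensor h1 h2)",
        OF equidist_pairs_nonempty equidist_pairs_nonempty])
    (auto simp: maxconv_ratio_nonneg bdd_below_maxconv_ratio nonzero_nonneg_l1_imp_nonneg_l1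
      intro!: maxconv_ratio_tensor_le tensor_in_nonzero_nonneg_l1 equidist_tensor)

lemma summable_on_slice:
  fixes g :: "'a \<times> 'b \<Rightarrow> real"
  assumes "g summable_on UNIV"
  shows "(\<lambda>b. g (a, b)) summable_on UNIV"
  using summable_on_SigmaD1[of "\<lambda>a b. g (a, b)" UNIV "\<lambda>_. UNIV"] assms by simp

lemma summable_on_slice_sums:
  fixes g :: "'a \<times> 'b \<Rightarrow> real"
  assumes "g summable_on UNIV"
  shows "(\<lambda>a. infsum (\<lambda>b. g (a, b)) UNIV) summable_on UNIV"
  using summable_on_SigmaD[of g UNIV "\<lambda>_. UNIV"] assms summable_on_slice[OF assms] by simp

lemma infsum_slice_sums:
  fixes g :: "'a \<times> 'b \<Rightarrow> real"
  assumes "g summable_on UNIV"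
  shows "infsum (\<lambda>a. infsum (\<lambda>b. g (a, b)) UNIV) UNIV = infsum g UNIV"
  using infsum_Sigma_banach[of g UNIV "\<lambda>_. UNIV"] assms by simp

lemma nonneg_l1_slice: "nonneg_l1 g \<Longrightarrow> nonneg_l1 (\<lambda>b. g (a, b))"
  by (simp add: nonneg_l1_def summable_on_slice)

lemma nonneg_l1_slice_lpnorms:
  fixes g :: "'a \<times> 'b \<Rightarrow> real"
  assumes "nonneg_l1 g" "1 \<le> p"
  shows "nonneg_l1 (\<lambda>a. lpnorm p (\<lambda>b. g (a, b)))"
proof -
  have "lpnorm p (\<lambda>b. g (a, b)) \<le> infsum (\<lambda>b. g (a, b)) UNIV" for a
    using nonneg_l1_slice[OF assms(1)] assms(2) by (rule lpnorm_le_infsum)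
  then show ?thesis
    unfolding nonneg_l1_def
    using summable_on_comparison_test[OF summable_on_slice_sums[OF nonneg_l1_summable[OF assms(1)]]]
    by (simp add: lpnorm_nonneg)
qed

lemma lpnorm_slice_lpnorms:
  fixes g :: "'a \<times> 'b \<Rightarrow> real"
  assumes "nonneg_l1 g" "1 \<le> p"
  shows "lpnorm p (\<lambda>a. lpnorm p (\<lambda>b. g (a, b))) = lpnorm p g"
proof -
  have "lpnorm p (\<lambda>b. g (a, b)) powr p = infsum (\<lambda>b. g (a, b) powr p) UNIV" for a
    using assms nonneg_l1_slice[OF assms(1)]
    by (simp add: lpnorm_eq powr_powr infsum_nonneg nonneg_l1_nonneg)
  then have "infsum (\<lambda>a. lpnorm p (\<lambda>b. g (a, b)) powr p) UNIV = infsum (\<lambda>z. g z powr p) UNIV"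
    using infsum_slice_sums[OF nonneg_l1_summable[OF nonneg_l1_powr(1)[OF assms]]] by simp
  then show ?thesis
    using assms by (simp add: lpnorm_eq nonneg_l1_slice_lpnorms)
qed

section \<open>The lower bound for gamma_p\<close>

text \<open>Choose the intermediate points (s + s', u) and (s, w) in the two maxima defining the
  right-hand side.\<close>
lemma maxconv_slice_le:
  fixes f1 :: "'a::ab_group_add \<Rightarrow> real" and f2 :: "'b::ab_group_add \<Rightarrow> real"
    and g h :: "'a \<times> 'b \<Rightarrow> real"
  assumes "nonneg_l1 f1" "nonneg_l1 f2" "nonneg_l1 g" "nonneg_l1 h"
  shows "f1 s * ((f2 \<star> (\<lambda>b. g (s', b))) \<star> (\<lambda>b. h (x - s - s', b))) y
    \<le> ((tensor f1 f2 \<star> g) \<star> h) (x, y)"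
proof (rule maxconv_mult_le)
  show "0 \<le> f1 s"
    using assms(1) by (rule nonneg_l1_nonneg)
  fix u
  have "(f1 s * h (x - s - s', y - u)) * (f2 \<star> (\<lambda>b. g (s', b))) u \<le> ((tensor f1 f2 \<star> g) \<star> h) (x, y)"
  proof (rule maxconv_mult_le)
    show "0 \<le> f1 s * h (x - s - s', y - u)"
      using assms by (simp add: nonneg_l1_nonneg)
    fix w
    have "(f1 s * h (x - s - s', y - u)) * (f2 w * g (s', u - w))
        = (tensor f1 f2 (s, w) * g ((s + s', u) - (s, w))) * h ((x, y) - (s + s', u))"
      by (simp add: algebra_simps)
    also have "\<dots> \<le> (tensor f1 f2 \<star> g) (s + s', u) * h ((x, y) - (s + s', u))"
      using assms by (intro mult_right_mono maxconv_ge nonneg_l1_tensor) (simp_all add: nonneg_l1_nonneg)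
    also have "\<dots> \<le> ((tensor f1 f2 \<star> g) \<star> h) (x, y)"
      using assms by (intro maxconv_ge nonneg_l1_maxconv nonneg_l1_tensor)
    finally show "(f1 s * h (x - s - s', y - u)) * (f2 w * g (s', u - w))
        \<le> ((tensor f1 f2 \<star> g) \<star> h) (x, y)" .
  qed
  then show "f1 s * ((f2 \<star> (\<lambda>b. g (s', b))) u * h (x - s - s', y - u))
      \<le> ((tensor f1 f2 \<star> g) \<star> h) (x, y)"
    by (simp add: ac_simps)
qed

text \<open>For fixed s and s' the slices g(s', -) and h(x - s - s', -) are test functions for
  gamma_p(f2).\<close>
lemma gamma_p_slices_le:
  fixes f1 :: "'a::ab_group_add \<Rightarrow> real" and f2 :: "'b::ab_group_add \<Rightarrow> real"
    and g h :: "'a \<times> 'b \<Rightarrow> real"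
  assumes "1 < p" "nonneg_l1 f1" "nonneg_l1 f2" "nonneg_l1 g" "nonneg_l1 h"
  shows "gamma_p p f2 * ((f1 \<star> (\<lambda>a. lpnorm p (\<lambda>b. g (a, b))))
      \<star> (\<lambda>a. lpnorm (conj_exp p) (\<lambda>b. h (a, b)))) x
    \<le> infsum (\<lambda>y. ((tensor f1 f2 \<star> g) \<star> h) (x, y)) UNIV"
proof -
  let ?G = "\<lambda>a. lpnorm p (\<lambda>b. g (a, b))"
  let ?H = "\<lambda>a. lpnorm (conj_exp p) (\<lambda>b. h (a, b))"
  let ?\<Phi> = "infsum (\<lambda>y. ((tensor f1 f2 \<star> g) \<star> h) (x, y)) UNIV"
  have fibre: "f1 s * (gamma_p p f2 * (?G s' * ?H (x - s - s'))) \<le> ?\<Phi>" for s s'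
  proof -
    let ?K = "(f2 \<star> (\<lambda>b. g (s', b))) \<star> (\<lambda>b. h (x - s - s', b))"
    have K: "nonneg_l1 ?K"
      using assms by (intro nonneg_l1_maxconv nonneg_l1_slice)
    have "gamma_p p f2 * (?G s' * ?H (x - s - s')) \<le> infsum ?K UNIV"
      using gamma_p_mult_le_l1norm[where f = f2, OF assms(1) nonneg_l1_slice[OF assms(4), of s']
          nonneg_l1_slice[OF assms(5), of "x - s - s'"]]
      by (simp add: l1norm_eq_infsum K)
    then have "f1 s * (gamma_p p f2 * (?G s' * ?H (x - s - s'))) \<le> infsum (\<lambda>y. f1 s * ?K y) UNIV"
      using assms(2) by (simp add: infsum_cmult_right' mult_left_mono nonneg_l1_nonneg)
    also have "\<dots> \<le> ?\<Phi>"
      using assms K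
      by (intro infsum_mono maxconv_slice_le summable_on_cmult_right nonneg_l1_summable
          nonneg_l1_slice nonneg_l1_maxconv nonneg_l1_tensor)
    finally show ?thesis .
  qed
  show ?thesis
  proof (rule maxconv_mult_le)
    show "0 \<le> gamma_p p f2"
      by (rule gamma_p_nonneg)
    fix u
    have "(gamma_p p f2 * ?H (x - u)) * (f1 \<star> ?G) u \<le> ?\<Phi>"
    proof (rule maxconv_mult_le)
      show "0 \<le> gamma_p p f2 * ?H (x - u)"
        by (simp add: gamma_p_nonneg lpnorm_nonneg)
      show "(gamma_p p f2 * ?H (x - u)) * (f1 w * ?G (u - w)) \<le> ?\<Phi>" for w
        using fibre[of w "u - w"] by (simp add: algebra_simps)
    qed
    then show "gamma_p p f2 * ((f1 \<star> ?G) u * ?H (x - u)) \<le> ?\<Phi>"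
      by (simp add: ac_simps)
  qed
qed

lemma gamma_p_tensor_mult_le:
  fixes f1 :: "'a::ab_group_add \<Rightarrow> real" and f2 :: "'b::ab_group_add \<Rightarrow> real"
    and g h :: "'a \<times> 'b \<Rightarrow> real"
  assumes "1 < p" "nonneg_l1 f1" "nonneg_l1 f2" "nonneg_l1 g" "nonneg_l1 h"
  shows "gamma_p p f1 * gamma_p p f2 * (lpnorm p g * lpnorm (conj_exp p) h)
    \<le> l1norm ((tensor f1 f2 \<star> g) \<star> h)"
proof -
  let ?G = "\<lambda>a. lpnorm p (\<lambda>b. g (a, b))"
  let ?H = "\<lambda>a. lpnorm (conj_exp p) (\<lambda>b. h (a, b))"
  let ?F = "(tensor f1 f2 \<star> g) \<star> h"
  have "1 < conj_exp p"
    using assms(1) by (rule conj_exp_gt_1)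
  then have G: "nonneg_l1 ?G" and H: "nonneg_l1 ?H"
    using assms by (simp_all add: nonneg_l1_slice_lpnorms)
  have F: "nonneg_l1 ?F"
    using assms by (intro nonneg_l1_maxconv nonneg_l1_tensor)
  have C: "nonneg_l1 ((f1 \<star> ?G) \<star> ?H)"
    using assms G H by (intro nonneg_l1_maxconv)
  have "gamma_p p f1 * gamma_p p f2 * (lpnorm p g * lpnorm (conj_exp p) h)
      = gamma_p p f2 * (gamma_p p f1 * (lpnorm p ?G * lpnorm (conj_exp p) ?H))"
    using assms \<open>1 < conj_exp p\<close> by (simp add: lpnorm_slice_lpnorms)
  also have "\<dots> \<le> gamma_p p f2 * l1norm ((f1 \<star> ?G) \<star> ?H)"
    using assms G H by (intro mult_left_mono gamma_p_mult_le_l1norm gamma_p_nonneg)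
  also have "\<dots> = infsum (\<lambda>x. gamma_p p f2 * ((f1 \<star> ?G) \<star> ?H) x) UNIV"
    using C by (simp add: l1norm_eq_infsum infsum_cmult_right')
  also have "\<dots> \<le> infsum (\<lambda>x. infsum (\<lambda>y. ?F (x, y)) UNIV) UNIV"
    using assms C F
    by (intro infsum_mono gamma_p_slices_le summable_on_cmult_right nonneg_l1_summable
        summable_on_slice_sums)
  also have "\<dots> = l1norm ?F"
    using F by (simp add: infsum_slice_sums nonneg_l1_summable l1norm_eq_infsum)
  finally show ?thesis .
qed

lemma gamma_p_tensor_ge:
  fixes f1 :: "'a::ab_group_add \<Rightarrow> real" and f2 :: "'b::ab_group_add \<Rightarrow> real"
  assumes "nonneg_l1 f1" "nonneg_l1 f2" "1 < p"
  shows "gamma_p p f1 * gamma_p p f2 \<le> gamma_p p (tensor f1 f2)"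
  unfolding gamma_p_eq_INF[of p "tensor f1 f2"]
proof (rule cINF_greatest)
  show "nonzero_nonneg_l1 \<times> nonzero_nonneg_l1 \<noteq> {}"
    by (simp add: nonzero_nonneg_l1_nonempty)
  fix gh :: "('a \<times> 'b \<Rightarrow> real) \<times> ('a \<times> 'b \<Rightarrow> real)"
  assume "gh \<in> nonzero_nonneg_l1 \<times> nonzero_nonneg_l1"
  then obtain g h where gh: "gh = (g, h)" "g \<in> nonzero_nonneg_l1" "h \<in> nonzero_nonneg_l1"
    by blast
  then show "gamma_p p f1 * gamma_p p f2
      \<le> (case gh of (g, h) \<Rightarrow> maxconv_ratio p (conj_exp p) (tensor f1 f2) g h)"
    using gamma_p_tensor_mult_le[OF assms(3,1,2), of g h] assms(3) conj_exp_gt_1[OF assms(3)]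
    by (simp add: le_maxconv_ratio_iff nonzero_nonneg_l1_imp_nonneg_l1)
qed

theorem mainTheorem11:
  fixes f1 :: "'a::ab_group_add \<Rightarrow> real" and f2 :: "'b::ab_group_add \<Rightarrow> real"
    and f :: "'a \<times> 'b \<Rightarrow> real" and p :: real
  assumes "nonneg_l1 f1" and "nonneg_l1 f2"
    and "\<And>x y. f (x, y) = f1 x * f2 y"
    and "1 < p"
  shows "gamma_p p f = gamma_p p f1 * gamma_p p f2 \<and>
         gamma' f \<le> gamma' f1 * gamma' f2 \<and>
         gamma'' f \<le> gamma'' f1 * gamma'' f2"
proof -
  have "f = tensor f1 f2"
    using assms(3) by (auto simp: tensor_def)
  then show ?thesis
    using gamma_p_tensor_le[OF assms(1,2,4)] gamma_p_tensor_ge[OF assms(1,2,4)]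
      gamma'_tensor_le[OF assms(1,2)] gamma''_tensor_le[OF assms(1,2)]
    by simp
qed

end
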